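(* Every unary FA-presentable tournament $(X,\rightarrow)$ decomposes as a finite disjoint union of trivial tournaments, countably infinite complete ascending tournaments, countably infinite complete descending tournaments, countably infinite near-complete ascending tournaments, and countably infinite near-complete descending tournaments; that is, $X$ can be partitioned into finitely many subsets each of which, with the induced relation, is a one-element tournament or a countably infinite tournament of one of these four kinds.
   Context: A tournament is $(X,\rightarrow)$ with $x\not\rightarrow x$ for all $x$ and, for distinct $x,y$, exactly one of $x\rightarrow y$, $y\rightarrow x$. A countably infinite tournament on $X=\{x_i:i\in\mathbb{N}\}$ is complete ascending if $x_i\rightarrow x_j$ for all $i<j$; complete descending if $x_j\rightarrow x_i$ for all $i<j$; near-complete ascending if $x_{i+1}\rightarrow x_i$ for all $i$ and $x_i\rightarrow x_j$ for all $i<j-1$; near-complete descending if $x_i\rightarrow x_{i+1}$ for all $i$ and $x_j\rightarrow x_i$ for all $i<j-1$. A structure is unary FA-presentable if there exist a regular language $L\subseteq a^*$ and a surjection $\phi:L\to X$ such that $\{(u,v)\in L^2:u\phi=v\phi\}$ and $\{(u,v)\in L^2:u\phi\rightarrow v\phi\}$ are regular relations (the sets of words $\mathrm{conv}(u,v)$ over $\{a,\$\}^2$, reading $u,v$ in parallel and padding the shorter with $\$$, are regular languages). *)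

theory Defs
  imports Main
begin

definition regular_lang :: "'s list set \<Rightarrow> bool" where
  "regular_lang L \<longleftrightarrow>
     (\<exists>(N::nat) (\<delta>::nat \<Rightarrow> 's \<Rightarrow> nat) (q0::nat) (F::nat set).
        q0 < N \<and> (\<forall>q<N. \<forall>s. \<delta> q s < N) \<and>
        L = {w. foldl \<delta> q0 w \<in> F})"

text \<open>Convolution of two words: read in parallel, padding the shorter with None (the symbol \$).\<close>
definition conv :: "'a list \<Rightarrow> 'b list \<Rightarrow> ('a option \<times> 'b option) list" where
  "conv u v = map (\<lambda>i. (if i < length u then Some (u ! i) else None,
                         if i < length v then Some (v ! i) else None))
                  [0..<max (length u) (length v)]"

definition regular_rel :: "('a list \<times> 'b list) set \<Rightarrow> bool" where
  "regular_rel R \<longleftrightarrow> regular_lang {conv u v | u v. (u, v) \<in> R}"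

definition tournament :: "'x set \<Rightarrow> ('x \<Rightarrow> 'x \<Rightarrow> bool) \<Rightarrow> bool" where
  "tournament X r \<longleftrightarrow> (\<forall>x\<in>X. \<not> r x x) \<and>
     (\<forall>x\<in>X. \<forall>y\<in>X. x \<noteq> y \<longrightarrow> (r x y \<longleftrightarrow> \<not> r y x))"

text \<open>Unary alphabet {a}: the type unit; the word a^n is replicate n ().\<close>
definition unary_FA_presentable :: "'x set \<Rightarrow> ('x \<Rightarrow> 'x \<Rightarrow> bool) \<Rightarrow> bool" where
  "unary_FA_presentable X r \<longleftrightarrow>
     (\<exists>(L::unit list set) (\<phi>::unit list \<Rightarrow> 'x).
        regular_lang L \<and> \<phi> ` L = X \<and>
        regular_rel {(u, v). u \<in> L \<and> v \<in> L \<and> \<phi> u = \<phi> v} \<and>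
        regular_rel {(u, v). u \<in> L \<and> v \<in> L \<and> r (\<phi> u) (\<phi> v)})"

definition complete_ascending :: "'x set \<Rightarrow> ('x \<Rightarrow> 'x \<Rightarrow> bool) \<Rightarrow> bool" where
  "complete_ascending Y r \<longleftrightarrow> (\<exists>f::nat \<Rightarrow> 'x. bij_betw f UNIV Y \<and>
      (\<forall>i j. i < j \<longrightarrow> r (f i) (f j)))"

definition complete_descending :: "'x set \<Rightarrow> ('x \<Rightarrow> 'x \<Rightarrow> bool) \<Rightarrow> bool" where
  "complete_descending Y r \<longleftrightarrow> (\<exists>f::nat \<Rightarrow> 'x. bij_betw f UNIV Y \<and>
      (\<forall>i j. i < j \<longrightarrow> r (f j) (f i)))"

definition near_complete_ascending :: "'x set \<Rightarrow> ('x \<Rightarrow> 'x \<Rightarrow> bool) \<Rightarrow> bool" where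
  "near_complete_ascending Y r \<longleftrightarrow> (\<exists>f::nat \<Rightarrow> 'x. bij_betw f UNIV Y \<and>
      (\<forall>i. r (f (Suc i)) (f i)) \<and> (\<forall>i j. i + 1 < j \<longrightarrow> r (f i) (f j)))"

definition near_complete_descending :: "'x set \<Rightarrow> ('x \<Rightarrow> 'x \<Rightarrow> bool) \<Rightarrow> bool" where
  "near_complete_descending Y r \<longleftrightarrow> (\<exists>f::nat \<Rightarrow> 'x. bij_betw f UNIV Y \<and>
      (\<forall>i. r (f i) (f (Suc i))) \<and> (\<forall>i j. i + 1 < j \<longrightarrow> r (f j) (f i)))"

end

theory Submission
  imports Defs "HOL-Library.Infinite_Set" "HOL-Library.Disjoint_Sets"
begin

text \<open>Over a unary alphabet a word is determined by its length, so a regular relation is read by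
  a DFA on the words \<open>(a,a)\<^sup>m ($,a)\<^sup>n\<^sup>-\<^sup>m\<close>: its behaviour is governed by the iterates of two
  self-maps of a finite state set, which are eventually periodic. Hence there are \<open>T\<close> and \<open>p > 0\<close>
  such that on each residue class \<open>T + c + k p\<close> both equality and the tournament relation
  between the \<open>k\<close>-th and \<open>k'\<close>-th word (\<open>k < k'\<close>) do not depend on \<open>k, k'\<close>. So each class
  presents a single point or a complete ascending or descending tournament. Removing from each class what earlier classes already cover leaves a
  finite set or an infinite subset of a complete chain, which is again a complete chain.\<close>

subsection \<open>Convolutions of unary words\<close>

abbreviation unary :: "nat \<Rightarrow> unit list" where
  "unary n \<equiv> replicate n ()"

lemma unit_list_eq_unary: "(u :: unit list) = unary (length u)"
  by (simp add: list_eq_iff_nth_eq)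

lemma map_fst_conv: "map fst (conv u v) = map Some u @ replicate (length v - length u) None"
  by (intro nth_equalityI) (auto simp: conv_def nth_append)

lemma map_snd_conv: "map snd (conv u v) = map Some v @ replicate (length u - length v) None"
  by (intro nth_equalityI) (auto simp: conv_def nth_append)

lemma conv_eq_conv_iff: "conv u v = conv u' v' \<longleftrightarrow> u = u' \<and> v = v'"
proof
  have strip: "map the [x \<leftarrow> map Some w @ replicate k None. x \<noteq> None] = w" for w :: "'c list" and k
    by (induction w) auto
  assume "conv u v = conv u' v'"
  then show "u = u' \<and> v = v'"
    using strip[of u] strip[of u'] strip[of v] strip[of v']
    by (metis map_fst_conv map_snd_conv)
qed simp

lemma conv_unary:
  "m \<le> n \<Longrightarrow> conv (unary m) (unary n) = replicate m (Some (), Some ()) @ replicate (n - m) (None, Some ())"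
  by (intro nth_equalityI) (auto simp: conv_def nth_append max_def)

lemma foldl_replicate: "foldl \<delta> q (replicate k s) = ((\<lambda>q. \<delta> q s) ^^ k) q"
  by (induction k arbitrary: q) (simp_all add: funpow_Suc_right del: funpow.simps)

lemma regular_rel_unaryE:
  assumes "regular_rel (R :: (unit list \<times> unit list) set)"
  obtains q0 N :: nat and A B :: "nat \<Rightarrow> nat" and F
  where "q0 < N" "\<forall>q<N. A q < N" "\<forall>q<N. B q < N"
    "\<And>m n. m \<le> n \<Longrightarrow> (unary m, unary n) \<in> R \<longleftrightarrow> (B ^^ (n - m)) ((A ^^ m) q0) \<in> F"
proof -
  obtain N q0 F and \<delta> :: "nat \<Rightarrow> unit option \<times> unit option \<Rightarrow> nat" where
    \<delta>: "q0 < N" "\<forall>q<N. \<forall>s. \<delta> q s < N" and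
    lang: "{conv u v | u v. (u, v) \<in> R} = {w. foldl \<delta> q0 w \<in> F}"
    using assms unfolding regular_rel_def regular_lang_def by blast
  have "(u, v) \<in> R \<longleftrightarrow> conv u v \<in> {conv u v | u v. (u, v) \<in> R}" for u v
    by (auto simp: conv_eq_conv_iff)
  then have "(u, v) \<in> R \<longleftrightarrow> foldl \<delta> q0 (conv u v) \<in> F" for u v
    unfolding lang by simp
  then show thesis
    using \<delta> by (intro that[of q0 N "\<lambda>q. \<delta> q (Some (), Some ())" "\<lambda>q. \<delta> q (None, Some ())"])
      (auto simp: conv_unary foldl_replicate)
qed

subsection \<open>Eventual periodicity\<close>

lemma funpow_closed: "\<forall>q<N. f q < N \<Longrightarrow> q < N \<Longrightarrow> (f ^^ i) q < N"
  by (induction i) auto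

lemma funpow_eventually_periodic:
  fixes f :: "nat \<Rightarrow> nat"
  assumes "\<forall>q<N. f q < N"
  obtains p T where "p > 0" "\<And>i k q. T \<le> i \<Longrightarrow> q < N \<Longrightarrow> (f ^^ (i + k * p)) q = (f ^^ i) q"
proof -
  define h where "h i = map (f ^^ i) [0..<N]" for i
  have "range h \<subseteq> {xs. set xs \<subseteq> {..<N} \<and> length xs = N}"
    using funpow_closed[OF assms] by (auto simp: h_def)
  then have "finite (range h)"
    using finite_lists_length_eq[of "{..<N}" N] finite_subset by blast
  then obtain i j where "i < j" "h i = h j"
    using finite_imageD[of h UNIV] unfolding inj_def by (metis infinite_UNIV_nat linorder_neqE_nat)
  then obtain d where "d > 0" and repeat: "\<And>q. q < N \<Longrightarrow> (f ^^ (i + d)) q = (f ^^ i) q"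
    by (intro that[of "j - i"]) (auto simp: h_def map_eq_conv)
  have "(f ^^ (i' + k * d)) q = (f ^^ i') q" if "i \<le> i'" "q < N" for i' k q
  proof (induction k)
    case (Suc k)
    have "i' + Suc k * d = (i' + k * d - i) + (i + d)"
      using \<open>i \<le> i'\<close> by (simp add: algebra_simps)
    then have "(f ^^ (i' + Suc k * d)) q = (f ^^ (i' + k * d - i)) ((f ^^ (i + d)) q)"
      by (metis funpow_add comp_apply)
    also have "\<dots> = (f ^^ (i' + k * d - i)) ((f ^^ i) q)"
      using repeat[OF \<open>q < N\<close>] by simp
    also have "\<dots> = (f ^^ (i' + k * d)) q"
      using \<open>i \<le> i'\<close> by (metis funpow_add comp_apply le_add_diff_inverse2 trans_le_add1)
    finally show ?case using Suc.IH by simp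
  qed simp
  then show thesis
    using \<open>d > 0\<close> by (intro that[of d i]) auto
qed

definition periodic_unary_rel :: "(unit list \<times> unit list) set \<Rightarrow> nat \<Rightarrow> nat \<Rightarrow> bool" where
  "periodic_unary_rel R T p \<longleftrightarrow>
     (\<forall>m n k. T \<le> m \<longrightarrow> m \<le> n \<longrightarrow>
        ((unary (m + k * p), unary (n + k * p)) \<in> R \<longleftrightarrow> (unary m, unary n) \<in> R)) \<and>
     (\<forall>m n k. m + T \<le> n \<longrightarrow> ((unary m, unary (n + k * p)) \<in> R \<longleftrightarrow> (unary m, unary n) \<in> R))"

lemma periodic_unary_rel_shift:
  "periodic_unary_rel R T p \<Longrightarrow> T \<le> m \<Longrightarrow> m \<le> n \<Longrightarrow>
    (unary (m + k * p), unary (n + k * p)) \<in> R \<longleftrightarrow> (unary m, unary n) \<in> R"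
  unfolding periodic_unary_rel_def by blast

lemma periodic_unary_rel_stretch:
  "periodic_unary_rel R T p \<Longrightarrow> m + T \<le> n \<Longrightarrow>
    (unary m, unary (n + k * p)) \<in> R \<longleftrightarrow> (unary m, unary n) \<in> R"
  unfolding periodic_unary_rel_def by blast

lemma periodic_unary_rel_mono:
  assumes "periodic_unary_rel R T p" "T \<le> T'"
  shows "periodic_unary_rel R T' (j * p)"
  unfolding periodic_unary_rel_def
proof (intro conjI allI impI)
  fix m n k
  show "T' \<le> m \<Longrightarrow> m \<le> n \<Longrightarrow>
      (unary (m + k * (j * p)), unary (n + k * (j * p))) \<in> R \<longleftrightarrow> (unary m, unary n) \<in> R"
    using periodic_unary_rel_shift[OF assms(1), of m n "k * j"] assms(2) by (simp add: mult.assoc)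
  show "m + T' \<le> n \<Longrightarrow> (unary m, unary (n + k * (j * p))) \<in> R \<longleftrightarrow> (unary m, unary n) \<in> R"
    using periodic_unary_rel_stretch[OF assms(1), of m n "k * j"] assms(2) by (simp add: mult.assoc)
qed

lemma regular_rel_unary_periodic:
  assumes "regular_rel (R :: (unit list \<times> unit list) set)"
  obtains p T where "p > 0" "periodic_unary_rel R T p"
proof -
  obtain q0 N :: nat and A B F where q0: "q0 < N" and A: "\<forall>q<N. A q < N" and B: "\<forall>q<N. B q < N"
    and R: "\<And>m n. m \<le> n \<Longrightarrow> (unary m, unary n) \<in> R \<longleftrightarrow> (B ^^ (n - m)) ((A ^^ m) q0) \<in> F"
    using regular_rel_unaryE[OF assms] by metis
  obtain pa Ta where pa: "pa > 0" "\<And>i k q. Ta \<le> i \<Longrightarrow> q < N \<Longrightarrow> (A ^^ (i + k * pa)) q = (A ^^ i) q"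
    using funpow_eventually_periodic[OF A] by metis
  obtain pb Tb where pb: "pb > 0" "\<And>i k q. Tb \<le> i \<Longrightarrow> q < N \<Longrightarrow> (B ^^ (i + k * pb)) q = (B ^^ i) q"
    using funpow_eventually_periodic[OF B] by metis
  have "periodic_unary_rel R (max Ta Tb) (pa * pb)"
    unfolding periodic_unary_rel_def
  proof (intro conjI allI impI)
    fix m n k assume "max Ta Tb \<le> m" "m \<le> n"
    moreover have "(A ^^ (m + (k * pb) * pa)) q0 = (A ^^ m) q0"
      using pa(2) \<open>max Ta Tb \<le> m\<close> q0 by simp
    ultimately show "(unary (m + k * (pa * pb)), unary (n + k * (pa * pb))) \<in> R \<longleftrightarrow> (unary m, unary n) \<in> R"
      using R[of m n] R[of "m + k * (pa * pb)" "n + k * (pa * pb)"] by (simp add: ac_simps)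
  next
    fix m n k assume "m + max Ta Tb \<le> n"
    moreover have "(B ^^ (n - m + (k * pa) * pb)) ((A ^^ m) q0) = (B ^^ (n - m)) ((A ^^ m) q0)"
      using pb(2)[of "n - m" "(A ^^ m) q0" "k * pa"] funpow_closed[OF A q0] \<open>m + max Ta Tb \<le> n\<close>
      by simp
    ultimately show "(unary m, unary (n + k * (pa * pb))) \<in> R \<longleftrightarrow> (unary m, unary n) \<in> R"
      using R[of m n] R[of m "n + k * (pa * pb)"] by (simp add: ac_simps)
  qed
  then show thesis
    using pa pb by (intro that) auto
qed

lemma regular_rels_unary_periodic:
  assumes "regular_rel (R1 :: (unit list \<times> unit list) set)" "regular_rel (R2 :: (unit list \<times> unit list) set)"
  obtains p T where "0 < p" "T \<le> p" "periodic_unary_rel R1 T p" "periodic_unary_rel R2 T p"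
proof -
  obtain p1 T1 where "0 < p1" and P1: "periodic_unary_rel R1 T1 p1"
    by (rule regular_rel_unary_periodic[OF assms(1)])
  obtain p2 T2 where "0 < p2" and P2: "periodic_unary_rel R2 T2 p2"
    by (rule regular_rel_unary_periodic[OF assms(2)])
  define T where "T = max T1 T2"
  define p where "p = (T + 1) * (p1 * p2)"
  have "1 \<le> p1 * p2"
    using \<open>0 < p1\<close> \<open>0 < p2\<close> by simp
  have "T = T * 1"
    by simp
  also have "\<dots> \<le> T * (p1 * p2)"
    using \<open>1 \<le> p1 * p2\<close> by (rule mult_le_mono2)
  also have "\<dots> \<le> p"
    unfolding p_def by (rule mult_le_mono1) simp
  finally have "T \<le> p" .
  have "T1 \<le> T" "T2 \<le> T"
    by (simp_all add: T_def)
  have p_eq: "p = ((T + 1) * p2) * p1"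
    unfolding p_def by (simp only: mult.assoc mult.commute[of p1 p2])
  have "periodic_unary_rel R1 T p"
    unfolding p_eq by (rule periodic_unary_rel_mono[OF P1 \<open>T1 \<le> T\<close>])
  moreover have "periodic_unary_rel R2 T p"
    unfolding p_def mult.assoc[symmetric] by (rule periodic_unary_rel_mono[OF P2 \<open>T2 \<le> T\<close>])
  moreover have "0 < p"
    using \<open>0 < p1\<close> \<open>0 < p2\<close> by (simp add: p_def)
  ultimately show thesis
    using \<open>T \<le> p\<close> by (intro that[of p T])
qed

lemma periodic_unary_rel_progression:
  assumes R: "periodic_unary_rel R T p" and "T \<le> p" "T \<le> m" "k < k'"
  shows "(unary (m + k * p), unary (m + k' * p)) \<in> R \<longleftrightarrow> (unary m, unary (m + p)) \<in> R"
proof -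
  obtain d where k': "k' = k + Suc d"
    using \<open>k < k'\<close> less_iff_Suc_add by auto
  have "(unary (m + k * p), unary (m + k' * p)) \<in> R \<longleftrightarrow> (unary m, unary (m + Suc d * p)) \<in> R"
    using periodic_unary_rel_shift[OF R \<open>T \<le> m\<close>, of "m + Suc d * p" k]
    by (simp add: k' algebra_simps)
  also have "\<dots> \<longleftrightarrow> (unary m, unary (m + p)) \<in> R"
    using periodic_unary_rel_stretch[OF R, of m "m + p" d] \<open>T \<le> p\<close> by (simp add: algebra_simps)
  finally show ?thesis .
qed

subsection \<open>Complete chains and decompositions\<close>

lemma complete_descending_iff_ascending_converse:
  "complete_descending Y r \<longleftrightarrow> complete_ascending Y (\<lambda>a b. r b a)"
  by (simp add: complete_ascending_def complete_descending_def)

lemma complete_ascending_subset: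
  assumes "complete_ascending Y r" "Z \<subseteq> Y" "infinite Z"
  shows "complete_ascending Z r"
proof -
  obtain f :: "nat \<Rightarrow> 'a" where f: "bij_betw f UNIV Y" and mono: "\<forall>i j. i < j \<longrightarrow> r (f i) (f j)"
    using assms(1) unfolding complete_ascending_def by blast
  define I where "I = f -` Z"
  have "inj_on f I"
    using f inj_on_subset[of f UNIV I] by (simp add: bij_betw_def)
  moreover have "f ` I = Z"
    using f assms(2) by (auto simp: I_def bij_betw_def)
  ultimately have "bij_betw f I Z"
    by (simp add: bij_betw_def)
  moreover from this have "infinite I"
    using assms(3) bij_betw_finite by blast
  ultimately have "bij_betw (f \<circ> enumerate I) UNIV Z"
    using bij_betw_trans[OF bij_enumerate] by blast
  moreover have "\<forall>i j. i < j \<longrightarrow> r ((f \<circ> enumerate I) i) ((f \<circ> enumerate I) j)"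
    using mono enumerate_mono[OF _ \<open>infinite I\<close>] by simp
  ultimately show ?thesis
    unfolding complete_ascending_def by blast
qed

lemma complete_descending_subset:
  "complete_descending Y r \<Longrightarrow> Z \<subseteq> Y \<Longrightarrow> infinite Z \<Longrightarrow> complete_descending Z r"
  unfolding complete_descending_iff_ascending_converse by (rule complete_ascending_subset)

definition tournament_block :: "('x \<Rightarrow> 'x \<Rightarrow> bool) \<Rightarrow> 'x set \<Rightarrow> bool" where
  "tournament_block r Y \<longleftrightarrow> card Y = 1 \<or> complete_ascending Y r \<or> complete_descending Y r \<or>
     near_complete_ascending Y r \<or> near_complete_descending Y r"

definition tournament_decomposition :: "('x \<Rightarrow> 'x \<Rightarrow> bool) \<Rightarrow> 'x set \<Rightarrow> 'x set set \<Rightarrow> bool" where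
  "tournament_decomposition r X P \<longleftrightarrow> finite P \<and> partition_on X P \<and> (\<forall>Y\<in>P. tournament_block r Y)"

lemma tournament_decomposition_Un:
  assumes P: "tournament_decomposition r U P" and Q: "tournament_decomposition r V Q"
    and "U \<inter> V = {}"
  shows "tournament_decomposition r (U \<union> V) (P \<union> Q)"
proof -
  have "partition_on U P" "partition_on V Q"
    using P Q by (simp_all add: tournament_decomposition_def)
  then have "partition_on (U \<union> V) (P \<union> Q)"
    using \<open>U \<inter> V = {}\<close> disjoint_union[of P Q] unfolding partition_on_def by auto
  then show ?thesis
    using P Q by (auto simp: tournament_decomposition_def)
qed

lemma tournament_decomposition_singletons:
  "finite D \<Longrightarrow> tournament_decomposition r D ((\<lambda>x. {x}) ` D)"
  by (simp add: tournament_decomposition_def tournament_block_def partition_on_singletons)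

lemma tournament_decomposition_chain:
  "D \<noteq> {} \<Longrightarrow> complete_ascending D r \<or> complete_descending D r \<Longrightarrow> tournament_decomposition r D {D}"
  by (auto simp: tournament_decomposition_def tournament_block_def partition_on_space)

lemma tournament_decomposition_Union:
  assumes "finite SS" "\<And>S. S \<in> SS \<Longrightarrow> finite S \<or> complete_ascending S r \<or> complete_descending S r"
  shows "\<exists>P. tournament_decomposition r (\<Union>SS) P"
  using assms
proof (induction rule: finite_induct)
  case empty
  have "tournament_decomposition r {} {}"
    by (simp add: tournament_decomposition_def partition_on_empty)
  then show ?case by auto
next
  case (insert S SS)
  then obtain P where P: "tournament_decomposition r (\<Union>SS) P"
    by auto
  define D where "D = S - \<Union>SS"
  have "\<exists>Q. tournament_decomposition r D Q"
  proof (cases "finite D")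
    case True
    then show ?thesis
      using tournament_decomposition_singletons by blast
  next
    case False
    have "D \<subseteq> S"
      by (auto simp: D_def)
    with False have "infinite S"
      using finite_subset by blast
    then have "complete_ascending D r \<or> complete_descending D r"
      using insert.prems[of S] complete_ascending_subset complete_descending_subset \<open>D \<subseteq> S\<close> False
      by blast
    then show ?thesis
      using tournament_decomposition_chain False by (metis infinite_imp_nonempty)
  qed
  moreover have "\<Union>SS \<inter> D = {}" "\<Union>(insert S SS) = \<Union>SS \<union> D"
    by (auto simp: D_def)
  ultimately show ?case
    using tournament_decomposition_Un[OF P] by metis
qed

subsection \<open>Residue classes of a unary presentation\<close>

definition pullback_rel :: "'a set \<Rightarrow> ('a \<Rightarrow> 'x) \<Rightarrow> ('x \<Rightarrow> 'x \<Rightarrow> bool) \<Rightarrow> ('a \<times> 'a) set" where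
  "pullback_rel L \<phi> r = {(u, v). u \<in> L \<and> v \<in> L \<and> r (\<phi> u) (\<phi> v)}"

lemma homogeneous_sequence_chain:
  fixes x :: "nat \<Rightarrow> 'x"
  assumes tour: "tournament X r" and "range x \<subseteq> X"
    and eq_iff: "\<And>i j. i < j \<Longrightarrow> x i = x j \<longleftrightarrow> x 0 = x 1"
    and r_iff: "\<And>i j. i < j \<Longrightarrow> r (x i) (x j) \<longleftrightarrow> r (x 0) (x 1)"
  shows "finite (range x) \<or> complete_ascending (range x) r \<or> complete_descending (range x) r"
proof (cases "x 0 = x 1")
  case True
  then have "x j = x 0" for j
    using eq_iff[of 0 j] by (metis neq0_conv)
  then have "range x = {x 0}"
    by auto
  then show ?thesis by simp
next
  case False
  then have "inj x"
    using eq_iff by (metis linorder_injI)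
  then have bij: "bij_betw x UNIV (range x)"
    by (simp add: bij_betw_def)
  show ?thesis
  proof (cases "r (x 0) (x 1)")
    case True
    then show ?thesis
      using bij r_iff unfolding complete_ascending_def by blast
  next
    case False
    have "r (x j) (x i)" if "i < j" for i j
      using tour \<open>range x \<subseteq> X\<close> r_iff[OF that] False \<open>inj x\<close> that
      unfolding tournament_def by (metis inj_eq less_irrefl range_subsetD)
    then show ?thesis
      using bij unfolding complete_descending_def by blast
  qed
qed

lemma residue_class_image_chain:
  fixes L :: "unit list set" and \<phi> :: "unit list \<Rightarrow> 'x" and c :: nat
  assumes tour: "tournament (\<phi> ` L) r"
    and E: "periodic_unary_rel (pullback_rel L \<phi> (=)) T p"
    and R: "periodic_unary_rel (pullback_rel L \<phi> r) T p"
    and "T \<le> p"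
  defines "S \<equiv> \<phi> ` (L \<inter> range (\<lambda>k. unary (T + c + k * p)))"
  shows "finite S \<or> complete_ascending S r \<or> complete_descending S r"
proof (cases "unary (T + c) \<in> L")
  case False
  have "unary (T + c + k * p) \<notin> L" for k
    using False periodic_unary_rel_shift[OF E le_add1[of T c] order_refl, of k]
    by (simp add: pullback_rel_def)
  then have "S = {}"
    by (auto simp: S_def)
  then show ?thesis by simp
next
  case True
  define x where "x k = \<phi> (unary (T + c + k * p))" for k
  have in_L: "unary (T + c + k * p) \<in> L" for k
    using True periodic_unary_rel_shift[OF E le_add1[of T c] order_refl, of k]
    by (simp add: pullback_rel_def)
  then have "S = range x"
    by (auto simp: S_def x_def)
  have "x i = x j \<longleftrightarrow> x 0 = x 1" if "i < j" for i j
    using periodic_unary_rel_progression[OF E \<open>T \<le> p\<close> le_add1[of T c] that]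
      periodic_unary_rel_progression[OF E \<open>T \<le> p\<close> le_add1[of T c], of 0 1] in_L in_L[of 0] in_L[of 1]
    by (simp add: pullback_rel_def x_def)
  moreover have "r (x i) (x j) \<longleftrightarrow> r (x 0) (x 1)" if "i < j" for i j
    using periodic_unary_rel_progression[OF R \<open>T \<le> p\<close> le_add1[of T c] that]
      periodic_unary_rel_progression[OF R \<open>T \<le> p\<close> le_add1[of T c], of 0 1] in_L in_L[of 0] in_L[of 1]
    by (simp add: pullback_rel_def x_def)
  moreover have "range x \<subseteq> \<phi> ` L"
    using in_L by (auto simp: x_def)
  ultimately have "finite (range x) \<or> complete_ascending (range x) r \<or> complete_descending (range x) r"
    using homogeneous_sequence_chain[OF tour] by blast
  then show ?thesis
    using \<open>S = range x\<close> by simp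
qed

lemma Un_progressions_eq_UNIV:
  assumes "0 < (p :: nat)"
  shows "{..<T} \<union> (\<Union>c<p. range (\<lambda>k. T + c + k * p)) = UNIV"
proof -
  have "n \<in> (\<Union>c<p. range (\<lambda>k. T + c + k * p))" if "T \<le> n" for n
  proof (rule UN_I)
    show "(n - T) mod p \<in> {..<p}"
      using assms by simp
    show "n \<in> range (\<lambda>k. T + (n - T) mod p + k * p)"
      using that by (intro range_eqI[of _ _ "(n - T) div p"]) (simp add: add.assoc mod_mult_div_eq)
  qed
  then show ?thesis
    by (metis UNIV_eq_I Un_iff lessThan_iff not_le)
qed

lemma image_unary_progressions:
  fixes L :: "unit list set"
  assumes "0 < p"
  shows "\<phi> ` L = \<Union>(insert (\<phi> ` (L \<inter> unary ` {..<T}))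
                       ((\<lambda>c. \<phi> ` (L \<inter> range (\<lambda>k. unary (T + c + k * p)))) ` {..<p}))"
proof -
  have "range unary = UNIV"
    using unit_list_eq_unary by (metis surj_def)
  then have "L = L \<inter> unary ` ({..<T} \<union> (\<Union>c<p. range (\<lambda>k. T + c + k * p)))"
    by (simp add: Un_progressions_eq_UNIV[OF assms])
  also have "\<dots> = (L \<inter> unary ` {..<T}) \<union> (\<Union>c<p. L \<inter> range (\<lambda>k. unary (T + c + k * p)))"
    by (simp only: image_Un image_UN image_comp comp_def Int_Un_distrib Int_UN_distrib)
  finally show ?thesis
    by (metis Union_insert image_UN image_Un)
qed

theorem corollary5p14:
  fixes X :: "'x set" and r :: "'x \<Rightarrow> 'x \<Rightarrow> bool"
  assumes "tournament X r" and "unary_FA_presentable X r"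
  shows "\<exists>P :: 'x set set. finite P \<and> \<Union>P = X \<and> (\<forall>Y\<in>P. Y \<noteq> {}) \<and>
           (\<forall>Y1\<in>P. \<forall>Y2\<in>P. Y1 \<noteq> Y2 \<longrightarrow> Y1 \<inter> Y2 = {}) \<and>
           (\<forall>Y\<in>P. card Y = 1 \<or> complete_ascending Y r \<or> complete_descending Y r \<or>
                   near_complete_ascending Y r \<or> near_complete_descending Y r)"
proof -
  obtain L :: "unit list set" and \<phi> :: "unit list \<Rightarrow> 'x" where X: "\<phi> ` L = X"
    and regular: "regular_rel (pullback_rel L \<phi> (=))" "regular_rel (pullback_rel L \<phi> r)"
    using assms(2) unfolding unary_FA_presentable_def pullback_rel_def by blast
  obtain p T where "0 < p" "T \<le> p"
    and periodic: "periodic_unary_rel (pullback_rel L \<phi> (=)) T p" "periodic_unary_rel (pullback_rel L \<phi> r) T p"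
    by (rule regular_rels_unary_periodic[OF regular])
  let ?SS = "insert (\<phi> ` (L \<inter> unary ` {..<T})) ((\<lambda>c. \<phi> ` (L \<inter> range (\<lambda>k. unary (T + c + k * p)))) ` {..<p})"
  have "X = \<Union>?SS"
    using image_unary_progressions[OF \<open>0 < p\<close>] X by metis
  moreover have "finite Y \<or> complete_ascending Y r \<or> complete_descending Y r" if "Y \<in> ?SS" for Y
    using that residue_class_image_chain[OF assms(1)[folded X] periodic \<open>T \<le> p\<close>] by auto
  ultimately obtain P where "tournament_decomposition r X P"
    using tournament_decomposition_Union[of ?SS r] by auto
  then show ?thesis
    unfolding tournament_decomposition_def tournament_block_def partition_on_def disjoint_def by blast
qed

end
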